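(* Let $z_1,\dots,z_{\ell+1}$ be the generators of the $*$-algebra $\mathcal{A}(S^{2\ell+1}_q)$. Then for every $N\in\mathbb{N}$, $$\sum_{j_1+\dots+j_{\ell+1}=N}[j_1,\dots,j_{\ell+1}]!\;z_1^{j_1}\cdots z_{\ell+1}^{j_{\ell+1}}\big(z_1^{j_1}\cdots z_{\ell+1}^{j_{\ell+1}}\big)^*=1,$$ the sum running over $(j_1,\dots,j_{\ell+1})\in\mathbb{N}^{\ell+1}$.
   Context: $0<q<1$, $\ell\ge1$, $[x]=\frac{q^x-q^{-x}}{q-q^{-1}}$, $[n]!=[n]\cdots[1]$, $[0]!=1$, and $[j_1,\dots,j_{\ell+1}]!:=\frac{[j_1+\dots+j_{\ell+1}]!}{[j_1]!\cdots[j_{\ell+1}]!}q^{-\sum_{r<s}j_rj_s}$. $\mathcal{A}(S^{2\ell+1}_q)$ is the $*$-algebra generated by $z_i,z_i^*$ ($1\le i\le\ell+1$) with relations $z_iz_j=qz_jz_i$ ($i<j$), $z_i^*z_j=qz_jz_i^*$ ($i\ne j$), $[z_1^*,z_1]=0$, $[z_{i+1}^*,z_{i+1}]=(1-q^2)\sum_{j=1}^iz_jz_j^*$ ($1\le i\le\ell$), and $\sum_{i=1}^{\ell+1}z_iz_i^*=1$. *)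

theory Defs
  imports Complex_Main
begin

definition qnum :: "real \<Rightarrow> nat \<Rightarrow> real" where
  "qnum q n = (q ^ n - inverse q ^ n) / (q - inverse q)"

definition qfact :: "real \<Rightarrow> nat \<Rightarrow> real" where
  "qfact q n = (\<Prod>k\<in>{1..n}. qnum q k)"

definition qmultinom :: "real \<Rightarrow> nat \<Rightarrow> (nat \<Rightarrow> nat) \<Rightarrow> real" where
  "qmultinom q l j =
     qfact q (\<Sum>r\<in>{1..l+1}. j r) / (\<Prod>r\<in>{1..l+1}. qfact q (j r))
     * inverse q ^ (\<Sum>r\<in>{1..l+1}. \<Sum>s\<in>{r<..l+1}. j r * j s)"

text \<open>A *-operation on a real algebra (covers complex *-algebras, viewed as real algebras):
  additive, real-linear, anti-multiplicative, involutive.\<close>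
definition is_star :: "('a::real_algebra_1 \<Rightarrow> 'a) \<Rightarrow> bool" where
  "is_star st \<longleftrightarrow>
     (\<forall>x y. st (x + y) = st x + st y) \<and>
     (\<forall>r x. st (scaleR r x) = scaleR r (st x)) \<and>
     (\<forall>x y. st (x * y) = st y * st x) \<and>
     (\<forall>x. st (st x) = x) \<and> st 1 = 1"

definition sphere_rels ::
  "real \<Rightarrow> nat \<Rightarrow> ('a::real_algebra_1 \<Rightarrow> 'a) \<Rightarrow> (nat \<Rightarrow> 'a) \<Rightarrow> bool" where
  "sphere_rels q l st z \<longleftrightarrow>
     (\<forall>i\<in>{1..l+1}. \<forall>j\<in>{1..l+1}. i < j \<longrightarrow> z i * z j = scaleR q (z j * z i)) \<and>
     (\<forall>i\<in>{1..l+1}. \<forall>j\<in>{1..l+1}. i \<noteq> j \<longrightarrow> st (z i) * z j = scaleR q (z j * st (z i))) \<and>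
     st (z 1) * z 1 = z 1 * st (z 1) \<and>
     (\<forall>i\<in>{1..l}. st (z (i+1)) * z (i+1) - z (i+1) * st (z (i+1))
          = scaleR (1 - q\<^sup>2) (\<Sum>j\<in>{1..i}. z j * st (z j))) \<and>
     (\<Sum>i\<in>{1..l+1}. z i * st (z i)) = 1"

definition monom :: "nat \<Rightarrow> (nat \<Rightarrow> 'a::monoid_mult) \<Rightarrow> (nat \<Rightarrow> nat) \<Rightarrow> 'a" where
  "monom l z j = prod_list (map (\<lambda>k. z k ^ j k) [1..<l+2])"

definition multi_indices :: "nat \<Rightarrow> nat \<Rightarrow> (nat \<Rightarrow> nat) set" where
  "multi_indices l N = {j. (\<forall>k. k \<notin> {1..l+1} \<longrightarrow> j k = 0) \<and> (\<Sum>k\<in>{1..l+1}. j k) = N}"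

end

theory Submission
  imports Defs
begin

text \<open>Put A_L = z_1 z_1^* + ... + z_L z_L^*, so that A_0 = 0 and A_(l+1) = 1. The sum over
  multi-indices supported on {1..L} equals A_L^N, by induction on L. The relations give
  A_L z_(L+1) = q^2 z_(L+1) A_L, and z_(L+1) commutes with A_(L+1); hence
  z_(L+1)^n (z_(L+1)^*)^n = (A_(L+1) - A_L)(A_(L+1) - q^-2 A_L)...(A_(L+1) - q^(-2(n-1)) A_L).
  The q-multinomial coefficient splits off a Gaussian binomial coefficient in q^-2, and since
  A_L and A_(L+1) commute, the q-binomial theorem collapses the resulting sum to A_(L+1)^N.\<close>

definition commute :: "'a::times \<Rightarrow> 'a \<Rightarrow> bool" where
  "commute x y \<longleftrightarrow> x * y = y * x"

lemma commute_sym: "commute x y \<Longrightarrow> commute y x"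
  unfolding commute_def by simp

lemma commute_one [simp]: "commute x (1::'a::monoid_mult)"
  unfolding commute_def by simp

lemma commute_mult: "commute x y \<Longrightarrow> commute x w \<Longrightarrow> commute x (y * w :: 'a::semigroup_mult)"
  unfolding commute_def by (metis mult.assoc)

lemma commute_diff: "commute x y \<Longrightarrow> commute x w \<Longrightarrow> commute x (y - w :: 'a::ring)"
  unfolding commute_def by (simp add: algebra_simps)

lemma commute_scaleR: "commute x y \<Longrightarrow> commute x (r *\<^sub>R y :: 'a::real_algebra)"
  unfolding commute_def by simp

lemma commute_power: "commute x y \<Longrightarrow> commute x (y ^ n :: 'a::monoid_mult)"
  by (induction n) (auto intro: commute_mult)

fun qpochhammer :: "'a::real_algebra_1 \<Rightarrow> 'a \<Rightarrow> real \<Rightarrow> nat \<Rightarrow> 'a" where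
  "qpochhammer A B t 0 = 1"
| "qpochhammer A B t (Suc n) = (B - t ^ n *\<^sub>R A) * qpochhammer A B t n"

lemma commute_qpochhammer:
  "commute X A \<Longrightarrow> commute X B \<Longrightarrow> commute X (qpochhammer A B t n)"
  by (induction n) (auto intro!: commute_mult commute_diff commute_scaleR)

lemma mult_power_qpochhammer:
  assumes "commute A B"
  shows "B * (A ^ m * qpochhammer A B t n)
    = A ^ m * qpochhammer A B t (Suc n) + t ^ n *\<^sub>R (A ^ Suc m * qpochhammer A B t n)"
proof -
  have "B * (A ^ m * qpochhammer A B t n) = A ^ m * (B * qpochhammer A B t n)"
    using commute_power[OF commute_sym[OF assms]] by (simp add: commute_def flip: mult.assoc)
  also have "B * qpochhammer A B t n = qpochhammer A B t (Suc n) + t ^ n *\<^sub>R (A * qpochhammer A B t n)"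
    by (simp add: algebra_simps)
  finally show ?thesis by (simp add: algebra_simps power_Suc2 del: power_Suc)
qed

text \<open>A q-binomial theorem for commuting A, B: the array c is pinned down by its t-Pascal
  recurrence, so it is the Gaussian binomial coefficient in t.\<close>
lemma power_eq_sum_qpochhammer:
  fixes A B :: "'a::real_algebra_1" and c :: "nat \<Rightarrow> nat \<Rightarrow> real"
  assumes AB: "commute A B"
    and c_0: "\<And>N. c N 0 = 1" and c_zero: "\<And>N k. N < k \<Longrightarrow> c N k = 0"
    and c_pascal: "\<And>N k. c (Suc N) (Suc k) = c N k + t ^ Suc k * c N (Suc k)"
  shows "(\<Sum>n\<le>N. c N n *\<^sub>R (A ^ (N - n) * qpochhammer A B t n)) = B ^ N"
proof (induction N)
  case 0
  then show ?case by (simp add: c_0)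
next
  case (Suc N)
  let ?P = "qpochhammer A B t"
  have shift: "(\<Sum>n\<le>N. (c N n * t ^ n) *\<^sub>R (A ^ Suc (N - n) * ?P n))
      = A ^ Suc N + (\<Sum>k\<le>N. (t ^ Suc k * c N (Suc k)) *\<^sub>R (A ^ (N - k) * ?P (Suc k)))"
  proof -
    have "(\<Sum>n\<le>N. (c N n * t ^ n) *\<^sub>R (A ^ Suc (N - n) * ?P n))
        = (\<Sum>n\<le>Suc N. (c N n * t ^ n) *\<^sub>R (A ^ Suc (N - n) * ?P n))"
      by (simp add: c_zero)
    also have "\<dots> = A ^ Suc N + (\<Sum>k\<le>N. (c N (Suc k) * t ^ Suc k) *\<^sub>R (A ^ Suc (N - Suc k) * ?P (Suc k)))"
      unfolding sum.atMost_Suc_shift by (simp add: c_0 del: power_Suc qpochhammer.simps(2))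
    also have "\<dots> = A ^ Suc N + (\<Sum>k\<le>N. (t ^ Suc k * c N (Suc k)) *\<^sub>R (A ^ (N - k) * ?P (Suc k)))"
      by (intro arg_cong[where f="\<lambda>x. _ + x"] sum.cong refl)
        (auto simp: c_zero mult.commute Suc_diff_Suc le_less simp del: power_Suc qpochhammer.simps)
    finally show ?thesis .
  qed
  have "B ^ Suc N = B * (\<Sum>n\<le>N. c N n *\<^sub>R (A ^ (N - n) * ?P n))"
    using Suc by simp
  also have "\<dots> = (\<Sum>n\<le>N. c N n *\<^sub>R (A ^ (N - n) * ?P (Suc n)))
      + (\<Sum>n\<le>N. (c N n * t ^ n) *\<^sub>R (A ^ Suc (N - n) * ?P n))"
    by (simp add: sum_distrib_left mult_power_qpochhammer[OF AB] scaleR_add_right sum.distrib del: qpochhammer.simps(2))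
  also have "\<dots> = A ^ Suc N + ((\<Sum>k\<le>N. c N k *\<^sub>R (A ^ (N - k) * ?P (Suc k)))
      + (\<Sum>k\<le>N. (t ^ Suc k * c N (Suc k)) *\<^sub>R (A ^ (N - k) * ?P (Suc k))))"
    unfolding shift by (simp only: add.left_commute)
  also have "\<dots> = A ^ Suc N + (\<Sum>k\<le>N. c (Suc N) (Suc k) *\<^sub>R (A ^ (Suc N - Suc k) * ?P (Suc k)))"
    by (simp add: c_pascal sum.distrib[symmetric] scaleR_add_left del: power_Suc qpochhammer.simps(2))
  also have "\<dots> = (\<Sum>n\<le>Suc N. c (Suc N) n *\<^sub>R (A ^ (Suc N - n) * ?P n))"
    unfolding sum.atMost_Suc_shift by (simp add: c_0)
  finally show ?case by simp
qed

lemma qnum_pos: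
  assumes "0 < q" "q < 1" "1 \<le> k" shows "0 < qnum q k"
proof -
  have iq: "1 < inverse q" using assms by (simp add: one_less_inverse)
  have "q ^ k < 1" using assms by (simp add: power_less_one_iff)
  moreover have "1 < inverse q ^ k" using iq assms(3) by (simp add: one_less_power)
  moreover have "q < inverse q" using assms iq by linarith
  ultimately show ?thesis unfolding qnum_def by (intro divide_neg_neg) auto
qed

lemma qfact_pos: "0 < q \<Longrightarrow> q < 1 \<Longrightarrow> 0 < qfact q n"
  unfolding qfact_def using qnum_pos by (intro prod_pos) auto

lemma qfact_0 [simp]: "qfact q 0 = 1"
  unfolding qfact_def by simp

lemma qfact_Suc: "qfact q (Suc n) = qfact q n * qnum q (Suc n)"
  unfolding qfact_def by (simp add: prod.cl_ivl_Suc)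

lemma qnum_add:
  assumes "0 < q" "q < 1"
  shows "qnum q (a + b) = q ^ b * qnum q a + inverse q ^ a * qnum q b"
proof -
  have "q - inverse q \<noteq> 0"
    using assms one_less_inverse[of q] by linarith
  have inv: "q ^ n * inverse q ^ n = 1" for n
    using assms by (simp flip: power_mult_distrib)
  have "q ^ (a + b) - inverse q ^ (a + b)
      = q ^ b * (q ^ a - inverse q ^ a) + inverse q ^ a * (q ^ b - inverse q ^ b)"
    using inv[of a] inv[of b] by (simp add: power_add algebra_simps)
  then show ?thesis
    by (simp only: qnum_def add_divide_distrib times_divide_eq_right)
qed

(* The symmetric q-binomial coefficient times q^(-k(N-k)), i.e. the Gaussian binomial
   coefficient in q^(-2). *)
definition qbinom :: "real \<Rightarrow> nat \<Rightarrow> nat \<Rightarrow> real" where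
  "qbinom q N k =
     (if k \<le> N then qfact q N / (qfact q k * qfact q (N - k)) * inverse q ^ (k * (N - k)) else 0)"

lemma qbinom_add: "qbinom q (k + b) k = qfact q (k + b) / (qfact q k * qfact q b) * inverse q ^ (k * b)"
  unfolding qbinom_def by simp

lemma qbinom_0 [simp]: "0 < q \<Longrightarrow> q < 1 \<Longrightarrow> qbinom q N 0 = 1"
  unfolding qbinom_def using qfact_pos[of q N] by simp

lemma qbinom_diag: "0 < q \<Longrightarrow> q < 1 \<Longrightarrow> qbinom q N N = 1"
  unfolding qbinom_def using qfact_pos[of q N] by simp

lemma qbinom_eq_0: "N < k \<Longrightarrow> qbinom q N k = 0"
  unfolding qbinom_def by simp

lemma qbinom_pascal_add:
  assumes "0 < q" "q < 1"
  shows "qbinom q (Suc k + Suc b) (Suc k)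
    = qbinom q (k + Suc b) k + (inverse q ^ 2) ^ Suc k * qbinom q (Suc k + b) (Suc k)"
proof -
  define w where "w = inverse q"
  define F where "F = qfact q (Suc (k + b))"
  define G where "G = qfact q k"
  define H where "H = qfact q b"
  define \<alpha> where "\<alpha> = qnum q (Suc k)"
  define \<beta> where "\<beta> = qnum q (Suc b)"
  have pos: "F > 0" "G > 0" "H > 0" "\<alpha> > 0" "\<beta> > 0"
    using qfact_pos[OF assms] qnum_pos[OF assms] by (auto simp: F_def G_def H_def \<alpha>_def \<beta>_def)
  have inv: "w ^ n * q ^ n = 1" for n
    using assms by (simp add: w_def flip: power_mult_distrib)
  have top: "qfact q (Suc k + Suc b) = F * (q ^ Suc b * \<alpha> + w ^ Suc k * \<beta>)"
    using qnum_add[OF assms, of "Suc k" "Suc b"] by (simp add: F_def \<alpha>_def \<beta>_def w_def qfact_Suc)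
  have w1: "w ^ (Suc k * Suc b) * q ^ Suc b = w ^ (k * Suc b)"
  proof -
    have "Suc k * Suc b = k * Suc b + Suc b" by simp
    then have "w ^ (Suc k * Suc b) = w ^ (k * Suc b) * w ^ Suc b"
      by (simp only: power_add)
    then show ?thesis by (simp only: mult.assoc inv mult_1_right)
  qed
  have w2: "w ^ (Suc k * Suc b) * w ^ Suc k = (w ^ 2) ^ Suc k * w ^ (Suc k * b)"
  proof -
    have "Suc k * Suc b + Suc k = 2 * Suc k + Suc k * b" by (simp add: algebra_simps)
    then show ?thesis by (simp only: power_add[symmetric] power_mult[symmetric])
  qed
  have "qbinom q (Suc k + Suc b) (Suc k)
      = F * (q ^ Suc b * \<alpha> + w ^ Suc k * \<beta>) / (G * \<alpha> * (H * \<beta>)) * w ^ (Suc k * Suc b)"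
    unfolding qbinom_add top by (simp add: qfact_Suc G_def H_def \<alpha>_def \<beta>_def w_def)
  also have "\<dots> = F / (G * H * \<beta>) * (w ^ (Suc k * Suc b) * q ^ Suc b)
      + F / (G * \<alpha> * H) * (w ^ (Suc k * Suc b) * w ^ Suc k)"
    using pos by (simp add: field_simps)
  also have "\<dots> = F / (G * H * \<beta>) * w ^ (k * Suc b) + (w ^ 2) ^ Suc k * (F / (G * \<alpha> * H) * w ^ (Suc k * b))"
    by (simp only: w1 w2) simp
  also have "\<dots> = qbinom q (k + Suc b) k + (inverse q ^ 2) ^ Suc k * qbinom q (Suc k + b) (Suc k)"
    unfolding qbinom_add
    by (simp add: qfact_Suc G_def H_def \<alpha>_def \<beta>_def w_def F_def mult.commute mult.left_commute)
  finally show ?thesis .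
qed

lemma qbinom_pascal:
  assumes "0 < q" "q < 1"
  shows "qbinom q (Suc N) (Suc k) = qbinom q N k + (inverse q ^ 2) ^ Suc k * qbinom q N (Suc k)"
proof (cases "Suc k \<le> N")
  case True
  then obtain b where "N = Suc k + b" using le_Suc_ex by blast
  then show ?thesis using qbinom_pascal_add[OF assms, of k b] by simp
next
  case False
  then consider "k = N" | "N < k" by linarith
  then show ?thesis by cases (simp_all add: qbinom_diag[OF assms] qbinom_eq_0)
qed

definition weak_compositions :: "nat \<Rightarrow> nat \<Rightarrow> (nat \<Rightarrow> nat) set" where
  "weak_compositions L N = {j. (\<forall>k. k \<notin> {1..L} \<longrightarrow> j k = 0) \<and> (\<Sum>k\<in>{1..L}. j k) = N}"

lemma weak_compositions_0: "weak_compositions 0 N = (if N = 0 then {\<lambda>_. 0} else {})"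
  unfolding weak_compositions_def by auto

lemma weak_compositions_Suc:
  "weak_compositions (Suc L) N
     = (\<lambda>(n, j). j(Suc L := n)) ` (SIGMA n:{..N}. weak_compositions L (N - n))"
proof (intro equalityI subsetI)
  fix j assume j: "j \<in> weak_compositions (Suc L) N"
  define j0 where "j0 = j(Suc L := 0)"
  have "(\<Sum>k\<in>{1..L}. j0 k) = (\<Sum>k\<in>{1..L}. j k)"
    by (rule sum.cong) (auto simp: j0_def)
  moreover have "(\<Sum>k\<in>{1..L}. j k) + j (Suc L) = N"
    using j by (simp add: weak_compositions_def sum.cl_ivl_Suc)
  ultimately have "j0 \<in> weak_compositions L (N - j (Suc L))" "j (Suc L) \<le> N"
    using j by (auto simp: weak_compositions_def j0_def)
  moreover have "j = j0(Suc L := j (Suc L))" by (auto simp: j0_def)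
  ultimately show "j \<in> (\<lambda>(n, j). j(Suc L := n)) ` (SIGMA n:{..N}. weak_compositions L (N - n))"
    by (intro image_eqI[where x="(j (Suc L), j0)"]) auto
next
  fix j assume "j \<in> (\<lambda>(n, j). j(Suc L := n)) ` (SIGMA n:{..N}. weak_compositions L (N - n))"
  then obtain n j0 where n: "n \<le> N" and j0: "j0 \<in> weak_compositions L (N - n)"
    and j: "j = j0(Suc L := n)" by auto
  have "(\<Sum>k\<in>{1..L}. j k) = (\<Sum>k\<in>{1..L}. j0 k)" by (rule sum.cong) (auto simp: j)
  then show "j \<in> weak_compositions (Suc L) N"
    using j0 n unfolding weak_compositions_def by (auto simp: sum.cl_ivl_Suc j)
qed

lemma inj_on_weak_compositions_Suc:
  "inj_on (\<lambda>(n, j). j(Suc L := n)) (SIGMA n:{..N}. weak_compositions L (N - n))"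
proof (rule inj_onI, clarsimp)
  fix n j n' j'
  assume j: "j \<in> weak_compositions L (N - n)" and j': "j' \<in> weak_compositions L (N - n')"
    and eq: "j(Suc L := n) = j'(Suc L := n')"
  have "n = n'" using fun_cong[OF eq, of "Suc L"] by simp
  moreover have "j k = j' k" for k
    using fun_cong[OF eq, of k] j j' by (cases "k = Suc L") (auto simp: weak_compositions_def)
  ultimately show "n = n' \<and> j = j'" by auto
qed

lemma finite_weak_compositions: "finite (weak_compositions L N)"
  by (induction L arbitrary: N) (auto simp: weak_compositions_0 weak_compositions_Suc)

lemma sum_weak_compositions_Suc:
  "(\<Sum>j\<in>weak_compositions (Suc L) N. f j)
     = (\<Sum>n\<le>N. \<Sum>j\<in>weak_compositions L (N - n). f (j(Suc L := n)))"
proof -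
  have "(\<Sum>j\<in>weak_compositions (Suc L) N. f j)
      = (\<Sum>(n, j)\<in>(SIGMA n:{..N}. weak_compositions L (N - n)). f (j(Suc L := n)))"
    unfolding weak_compositions_Suc
    by (subst sum.reindex[OF inj_on_weak_compositions_Suc]) (simp add: case_prod_beta)
  also have "\<dots> = (\<Sum>n\<le>N. \<Sum>j\<in>weak_compositions L (N - n). f (j(Suc L := n)))"
    by (simp add: sum.Sigma[symmetric] finite_weak_compositions)
  finally show ?thesis .
qed

definition qmultinomial :: "real \<Rightarrow> nat \<Rightarrow> (nat \<Rightarrow> nat) \<Rightarrow> real" where
  "qmultinomial q L j =
     qfact q (\<Sum>r\<in>{1..L}. j r) / (\<Prod>r\<in>{1..L}. qfact q (j r))
     * inverse q ^ (\<Sum>r\<in>{1..L}. \<Sum>s\<in>{r<..L}. j r * j s)"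

lemma qmultinomial_0: "qmultinomial q 0 j = 1"
  unfolding qmultinomial_def by simp

lemma sum_pairs_fun_upd:
  fixes j :: "nat \<Rightarrow> nat"
  shows "(\<Sum>r\<in>{1..Suc L}. \<Sum>s\<in>{r<..Suc L}. (j(Suc L := n)) r * (j(Suc L := n)) s)
     = (\<Sum>r\<in>{1..L}. \<Sum>s\<in>{r<..L}. j r * j s) + n * (\<Sum>r\<in>{1..L}. j r)"
proof -
  have inner: "(\<Sum>s\<in>{r<..Suc L}. (j(Suc L := n)) r * (j(Suc L := n)) s)
      = (\<Sum>s\<in>{r<..L}. j r * j s) + j r * n" if "r \<in> {1..L}" for r
  proof -
    have "{r<..Suc L} = insert (Suc L) {r<..L}" using that by auto
    moreover have "(\<Sum>s\<in>{r<..L}. (j(Suc L := n)) r * (j(Suc L := n)) s) = (\<Sum>s\<in>{r<..L}. j r * j s)"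
      using that by (intro sum.cong) auto
    ultimately show ?thesis using that by (simp add: add.commute)
  qed
  have "(\<Sum>r\<in>{1..Suc L}. \<Sum>s\<in>{r<..Suc L}. (j(Suc L := n)) r * (j(Suc L := n)) s)
      = (\<Sum>r\<in>{1..L}. (\<Sum>s\<in>{r<..L}. j r * j s) + j r * n)"
    by (simp add: sum.cl_ivl_Suc inner del: fun_upd_apply)
  also have "\<dots> = (\<Sum>r\<in>{1..L}. \<Sum>s\<in>{r<..L}. j r * j s) + (\<Sum>r\<in>{1..L}. j r) * n"
    by (simp only: sum.distrib sum_distrib_right)
  finally show ?thesis by (simp only: mult.commute)
qed

lemma qmultinomial_fun_upd:
  assumes "0 < q" "q < 1" "j \<in> weak_compositions L (N - n)" "n \<le> N"
  shows "qmultinomial q (Suc L) (j(Suc L := n)) = qmultinomial q L j * qbinom q N n"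
proof -
  have sum_j: "(\<Sum>r\<in>{1..L}. j r) = N - n"
    using assms(3) by (simp add: weak_compositions_def)
  have agree: "\<And>r. r \<in> {1..L} \<Longrightarrow> (j(Suc L := n)) r = j r" by auto
  have "(\<Sum>r\<in>{1..Suc L}. (j(Suc L := n)) r) = N"
    using sum_j assms(4) by (simp add: sum.cl_ivl_Suc sum.cong[OF refl agree])
  moreover have "(\<Prod>r\<in>{1..Suc L}. qfact q ((j(Suc L := n)) r)) = (\<Prod>r\<in>{1..L}. qfact q (j r)) * qfact q n"
    by (simp add: prod.cl_ivl_Suc prod.cong[OF refl agree])
  moreover have "qfact q (N - n) > 0" "qfact q n > 0"
    using qfact_pos[OF assms(1,2)] by auto
  ultimately show ?thesis
    unfolding qmultinomial_def sum_pairs_fun_upd sum_j qbinom_def using assms(4)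
    by (simp add: power_add field_simps)
qed

definition monomial :: "(nat \<Rightarrow> 'a::monoid_mult) \<Rightarrow> nat \<Rightarrow> (nat \<Rightarrow> nat) \<Rightarrow> 'a" where
  "monomial z L j = prod_list (map (\<lambda>k. z k ^ j k) [1..<L+1])"

lemma monomial_0: "monomial z 0 j = 1"
  unfolding monomial_def by simp

lemma monomial_Suc: "monomial z (Suc L) j = monomial z L j * z (Suc L) ^ j (Suc L)"
  unfolding monomial_def by simp

lemma monomial_fun_upd: "monomial z L (j(Suc L := n)) = monomial z L j"
  unfolding monomial_def by (rule arg_cong[where f=prod_list]) auto

locale star_map =
  fixes st :: "'a::real_algebra_1 \<Rightarrow> 'a"
  assumes is_star: "is_star st"
begin

lemma star_add: "st (x + y) = st x + st y"
  and star_scaleR: "st (r *\<^sub>R x) = r *\<^sub>R st x"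
  and star_mult: "st (x * y) = st y * st x"
  and star_star: "st (st x) = x"
  and star_one: "st 1 = 1"
  using is_star unfolding is_star_def by auto

lemma star_zero: "st 0 = 0"
  using star_add[of 0 0] by simp

lemma star_sum: "st (sum f S) = (\<Sum>x\<in>S. st (f x))"
  by (induction S rule: infinite_finite_induct) (auto simp: star_zero star_add)

lemma star_power: "st (x ^ n) = st x ^ n"
  by (induction n) (simp_all add: star_one star_mult power_commutes)

lemma commute_star_monomial:
  "(\<And>k. k \<in> {1..L} \<Longrightarrow> commute X (st (z k))) \<Longrightarrow> commute X (st (monomial z L j))"
  by (induction L) (auto simp: monomial_0 monomial_Suc star_one star_mult star_power
      intro!: commute_mult commute_power)

end

locale quantum_sphere = star_map st for st :: "'a::real_algebra_1 \<Rightarrow> 'a" +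
  fixes q :: real and l :: nat and z :: "nat \<Rightarrow> 'a"
  assumes q_pos: "0 < q" and q_less_1: "q < 1" and relations: "sphere_rels q l st z"
begin

lemma z_mult_z: "i \<in> {1..l+1} \<Longrightarrow> j \<in> {1..l+1} \<Longrightarrow> i < j \<Longrightarrow> z i * z j = q *\<^sub>R (z j * z i)"
  and star_z_mult_z:
    "i \<in> {1..l+1} \<Longrightarrow> j \<in> {1..l+1} \<Longrightarrow> i \<noteq> j \<Longrightarrow> st (z i) * z j = q *\<^sub>R (z j * st (z i))"
  and star_z_1_commute: "st (z 1) * z 1 = z 1 * st (z 1)"
  and star_z_commutator: "i \<in> {1..l} \<Longrightarrow> st (z (Suc i)) * z (Suc i) - z (Suc i) * st (z (Suc i))
          = (1 - q\<^sup>2) *\<^sub>R (\<Sum>j\<in>{1..i}. z j * st (z j))"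
  and sum_z_star_z: "(\<Sum>i\<in>{1..l+1}. z i * st (z i)) = 1"
  using relations unfolding sphere_rels_def by auto

definition A :: "nat \<Rightarrow> 'a" where
  "A L = (\<Sum>k\<in>{1..L}. z k * st (z k))"

lemma A_0: "A 0 = 0"
  unfolding A_def by simp

lemma A_Suc: "A (Suc L) = A L + z (Suc L) * st (z (Suc L))"
  unfolding A_def by (simp add: sum.cl_ivl_Suc)

lemma star_A: "st (A L) = A L"
  unfolding A_def by (simp add: star_sum star_mult star_star)

lemma A_mult_z_Suc:
  assumes "L \<le> l" shows "A L * z (Suc L) = q\<^sup>2 *\<^sub>R (z (Suc L) * A L)"
proof -
  have "z k * st (z k) * z (Suc L) = q\<^sup>2 *\<^sub>R (z (Suc L) * (z k * st (z k)))" if k: "k \<in> {1..L}" for k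
  proof -
    have "z k * st (z k) * z (Suc L) = q *\<^sub>R ((z k * z (Suc L)) * st (z k))"
      using assms k by (simp add: star_z_mult_z mult.assoc)
    also have "\<dots> = q\<^sup>2 *\<^sub>R (z (Suc L) * (z k * st (z k)))"
      using assms k by (simp add: z_mult_z mult.assoc power2_eq_square)
    finally show ?thesis .
  qed
  then show ?thesis
    unfolding A_def sum_distrib_right sum_distrib_left scaleR_sum_right by (rule sum.cong[OF refl])
qed

lemma star_z_Suc_mult_A:
  assumes "L \<le> l" shows "st (z (Suc L)) * A L = q\<^sup>2 *\<^sub>R (A L * st (z (Suc L)))"
  using arg_cong[OF A_mult_z_Suc[OF assms], of st] by (simp add: star_mult star_scaleR star_A)

lemma commute_A_Suc_z_Suc:
  assumes "L \<le> l" shows "commute (A (Suc L)) (z (Suc L))"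
proof (cases "L = 0")
  case True
  then show ?thesis using star_z_1_commute by (simp add: commute_def A_Suc A_0 mult.assoc)
next
  case False
  let ?Z = "z (Suc L)"
  have "st ?Z * ?Z - ?Z * st ?Z = (1 - q\<^sup>2) *\<^sub>R A L"
    using star_z_commutator[of L] assms False unfolding A_def by auto
  then have commutator: "st ?Z * ?Z = ?Z * st ?Z + (1 - q\<^sup>2) *\<^sub>R A L"
    by (simp add: algebra_simps)
  have "A (Suc L) * ?Z = A L * ?Z + ?Z * (st ?Z * ?Z)"
    by (simp add: A_Suc algebra_simps)
  also have "\<dots> = q\<^sup>2 *\<^sub>R (?Z * A L) + ?Z * (?Z * st ?Z) + (1 - q\<^sup>2) *\<^sub>R (?Z * A L)"
    by (simp add: A_mult_z_Suc[OF assms] commutator algebra_simps)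
  also have "\<dots> = ?Z * A (Suc L)"
    by (simp add: A_Suc algebra_simps scaleR_left_diff_distrib)
  finally show ?thesis unfolding commute_def .
qed

lemma commute_A_z:
  "i \<le> Suc l \<Longrightarrow> k \<in> {1..i} \<Longrightarrow> commute (A i) (z k)"
proof (induction i)
  case 0
  then show ?case by simp
next
  case (Suc i)
  show ?case
  proof (cases "k = Suc i")
    case True
    then show ?thesis using commute_A_Suc_z_Suc Suc.prems by simp
  next
    case False
    then have k: "k \<in> {1..i}" using Suc.prems by auto
    have "z (Suc i) * st (z (Suc i)) * z k = q *\<^sub>R (z (Suc i) * z k * st (z (Suc i)))"
      using Suc.prems k by (simp add: mult.assoc star_z_mult_z)
    also have "\<dots> = z k * (z (Suc i) * st (z (Suc i)))"
      using Suc.prems k by (simp add: mult.assoc[symmetric] z_mult_z)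
    finally have "commute (z (Suc i) * st (z (Suc i))) (z k)"
      by (simp add: commute_def)
    moreover have "commute (A i) (z k)" using Suc k by simp
    ultimately show ?thesis unfolding A_Suc commute_def by (simp add: distrib_left distrib_right)
  qed
qed

lemma commute_A_star_z:
  assumes "i \<le> Suc l" "k \<in> {1..i}" shows "commute (A i) (st (z k))"
  using arg_cong[OF commute_A_z[OF assms, unfolded commute_def], of st]
  by (simp add: commute_def star_mult star_A)

lemma commute_A_A_Suc:
  assumes "L \<le> l" shows "commute (A L) (A (Suc L))"
proof -
  let ?Z = "z (Suc L)"
  have "A L * (?Z * st ?Z) = q\<^sup>2 *\<^sub>R (?Z * A L * st ?Z)"
    by (simp add: mult.assoc[symmetric] A_mult_z_Suc[OF assms])
  also have "\<dots> = ?Z * st ?Z * A L"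
    by (simp add: mult.assoc star_z_Suc_mult_A[OF assms])
  finally show ?thesis unfolding A_Suc commute_def by (simp add: algebra_simps)
qed

lemma z_power_mult_star_power:
  assumes "L \<le> l"
  shows "z (Suc L) ^ n * st (z (Suc L)) ^ n = qpochhammer (A L) (A (Suc L)) (inverse q ^ 2) n"
proof -
  let ?Z = "z (Suc L)" and ?t = "inverse q ^ 2"
  have "?t * q\<^sup>2 = 1" using q_pos by (simp flip: power_mult_distrib)
  then have z_mult_A: "?Z * A L = ?t *\<^sub>R (A L * ?Z)"
    by (simp add: A_mult_z_Suc[OF assms])
  have z_power_mult_A: "?Z ^ n * A L = ?t ^ n *\<^sub>R (A L * ?Z ^ n)" for n
  proof (induction n)
    case 0
    then show ?case by simp
  next
    case (Suc n)
    have "?Z ^ Suc n * A L = ?t ^ n *\<^sub>R ((?Z * A L) * ?Z ^ n)"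
      by (simp add: Suc mult.assoc)
    then show ?case by (simp add: z_mult_A mult.assoc)
  qed
  have z_power_mult_A_Suc: "?Z ^ n * A (Suc L) = A (Suc L) * ?Z ^ n" for n
    using commute_power[OF commute_A_Suc_z_Suc[OF assms]] by (simp add: commute_def)
  show ?thesis
  proof (induction n)
    case 0
    then show ?case by simp
  next
    case (Suc n)
    have "?Z ^ Suc n * st ?Z ^ Suc n = ?Z ^ n * (?Z * st ?Z) * st ?Z ^ n"
      by (simp only: power_Suc2[of ?Z] power_Suc[of "st ?Z"] mult.assoc)
    also have "?Z * st ?Z = A (Suc L) - A L"
      by (simp add: A_Suc)
    also have "?Z ^ n * (A (Suc L) - A L) = (A (Suc L) - ?t ^ n *\<^sub>R A L) * ?Z ^ n"
      by (simp add: algebra_simps z_power_mult_A z_power_mult_A_Suc)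
    finally show ?case by (simp only: mult.assoc Suc.IH qpochhammer.simps(2))
  qed
qed

lemma sum_weak_compositions_eq_A_power:
  "L \<le> Suc l \<Longrightarrow>
    (\<Sum>j\<in>weak_compositions L N. qmultinomial q L j *\<^sub>R (monomial z L j * st (monomial z L j)))
      = A L ^ N"
proof (induction L arbitrary: N)
  case 0
  then show ?case
    by (cases N) (simp_all add: weak_compositions_0 qmultinomial_0 monomial_0 star_one A_0)
next
  case (Suc L)
  then have L: "L \<le> l" by simp
  let ?P = "qpochhammer (A L) (A (Suc L)) (inverse q ^ 2)"
  let ?term = "\<lambda>L j. qmultinomial q L j *\<^sub>R (monomial z L j * st (monomial z L j))"
  have commute_P: "commute (?P n) (st (monomial z L j))" for n j
  proof (rule commute_star_monomial)
    fix k assume "k \<in> {1..L}"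
    then show "commute (?P n) (st (z k))"
      using commute_A_star_z[of L k] commute_A_star_z[of "Suc L" k] L
      by (auto intro: commute_sym commute_qpochhammer)
  qed
  have split: "?term (Suc L) (j(Suc L := n)) = qbinom q N n *\<^sub>R (?term L j * ?P n)"
    if "j \<in> weak_compositions L (N - n)" "n \<le> N" for j n
  proof -
    have "monomial z (Suc L) (j(Suc L := n)) * st (monomial z (Suc L) (j(Suc L := n)))
        = monomial z L j * (z (Suc L) ^ n * st (z (Suc L)) ^ n) * st (monomial z L j)"
      by (simp add: monomial_Suc monomial_fun_upd star_mult star_power mult.assoc)
    also have "\<dots> = monomial z L j * st (monomial z L j) * ?P n"
      using commute_P[of n j] by (simp add: z_power_mult_star_power[OF L] commute_def mult.assoc)
    finally show ?thesis
      using qmultinomial_fun_upd[OF q_pos q_less_1 that] by (simp add: mult.commute)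
  qed
  have "(\<Sum>j\<in>weak_compositions (Suc L) N. ?term (Suc L) j)
      = (\<Sum>n\<le>N. qbinom q N n *\<^sub>R ((\<Sum>j\<in>weak_compositions L (N - n). ?term L j) * ?P n))"
    unfolding sum_weak_compositions_Suc
    by (simp add: split scaleR_sum_right sum_distrib_right)
  also have "\<dots> = (\<Sum>n\<le>N. qbinom q N n *\<^sub>R (A L ^ (N - n) * ?P n))"
    using Suc.IH L by simp
  also have "\<dots> = A (Suc L) ^ N"
    by (rule power_eq_sum_qpochhammer[OF commute_A_A_Suc[OF L]])
      (simp_all add: q_pos q_less_1 qbinom_eq_0 qbinom_pascal)
  finally show ?case .
qed

end

theorem lemma4p2:
  fixes q :: real and l N :: nat and st :: "'a::real_algebra_1 \<Rightarrow> 'a" and z :: "nat \<Rightarrow> 'a"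
  assumes "0 < q" "q < 1" "l \<ge> 1"
    and "is_star st" and "sphere_rels q l st z"
  shows "(\<Sum>j\<in>multi_indices l N. scaleR (qmultinom q l j) (monom l z j * st (monom l z j))) = 1"
proof -
  interpret quantum_sphere st q l z
    using assms(1,2,4,5) by unfold_locales auto
  have "multi_indices l N = weak_compositions (Suc l) N"
    unfolding multi_indices_def weak_compositions_def by simp
  moreover have "qmultinom q l j = qmultinomial q (Suc l) j" for j
    unfolding qmultinom_def qmultinomial_def by simp
  moreover have "monom l z j = monomial z (Suc l) j" for j
    unfolding monom_def monomial_def by simp
  moreover have "A (Suc l) = 1"
    using sum_z_star_z unfolding A_def by simp
  ultimately show ?thesis
    using sum_weak_compositions_eq_A_power[of "Suc l" N] by simp
qed

end
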